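(* Let $G(\mathcal V,\mathcal E)$ be a finite simple directed graph and $f\ge 0$ an integer. Suppose that for every partition $A,B,F$ of $\mathcal V$ with $A,B$ non-empty and $|F|\le f$, either $A \Rightarrow_{\mathcal V - F} B$ or $B \Rightarrow_{\mathcal V - F} A$. Then for every partition $L,C,R,F$ of $\mathcal V$ (with $C$ or $F$ possibly empty) such that $L,R$ are non-empty and $|F|\le f$, either $L\cup C\rightarrow R$ or $R\cup C\rightarrow L$.
   Context: For disjoint sets $X,Y\subseteq\mathcal V$ with $Y$ non-empty, $X\rightarrow Y$ means that $X$ contains at least $f+1$ distinct nodes $i$ such that $(i,j)\in\mathcal E$ for some $j\in Y$. An $(X,y)$-path is a directed path from some node of $X$ to the node $y\notin X$; it excludes $F$ if it contains no node of $F$; $(X,y)$-paths are disjoint if they pairwise share only $y$. For pairwise disjoint $X,Y,F$ with $|F|\le f$, $X \Rightarrow_{\mathcal V - F} Y$ means: $Y=\emptyset$, or every $y\in Y$ has at least $f+1$ pairwise disjoint $(X,y)$-paths excluding $F$. *)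

theory Defs
  imports Main
begin

definition simple_digraph :: "'a set \<Rightarrow> ('a \<times> 'a) set \<Rightarrow> bool" where
  "simple_digraph V E \<longleftrightarrow> finite V \<and> E \<subseteq> V \<times> V \<and> (\<forall>v. (v, v) \<notin> E)"

definition reach_arrow :: "('a \<times> 'a) set \<Rightarrow> nat \<Rightarrow> 'a set \<Rightarrow> 'a set \<Rightarrow> bool" where
  "reach_arrow E f X Y \<longleftrightarrow> card {i \<in> X. \<exists>j \<in> Y. (i, j) \<in> E} \<ge> f + 1"

definition dpath :: "('a \<times> 'a) set \<Rightarrow> 'a list \<Rightarrow> bool" where
  "dpath E p \<longleftrightarrow> p \<noteq> [] \<and> distinct p \<and> (\<forall>i. Suc i < length p \<longrightarrow> (p ! i, p ! Suc i) \<in> E)"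

definition Xy_path :: "('a \<times> 'a) set \<Rightarrow> 'a set \<Rightarrow> 'a \<Rightarrow> 'a list \<Rightarrow> bool" where
  "Xy_path E X y p \<longleftrightarrow> dpath E p \<and> hd p \<in> X \<and> last p = y"

definition reduced_arrow :: "('a \<times> 'a) set \<Rightarrow> nat \<Rightarrow> 'a set \<Rightarrow> 'a set \<Rightarrow> 'a set \<Rightarrow> bool" where
  "reduced_arrow E f F X Y \<longleftrightarrow> Y = {} \<or>
     (\<forall>y \<in> Y. \<exists>P. finite P \<and> card P \<ge> f + 1 \<and>
        (\<forall>p \<in> P. Xy_path E X y p \<and> set p \<inter> F = {}) \<and>
        (\<forall>p \<in> P. \<forall>q \<in> P. p \<noteq> q \<longrightarrow> set p \<inter> set q = {y}))"

end

theory Submission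
  imports Defs
begin

text \<open>Apply the hypothesis to the partition \<open>L\<close>, \<open>C \<union> R\<close>, \<open>F\<close>. If \<open>L\<close> reaches the other side,
  pick \<open>y \<in> R\<close>: each of the \<open>f + 1\<close> disjoint \<open>(L, y)\<close>-paths avoiding \<open>F\<close> enters \<open>R\<close> along an
  edge from a vertex of \<open>L \<union> C\<close>. That vertex lies outside \<open>R\<close>, so it is not the common endpoint
  \<open>y\<close>, and disjointness makes the \<open>f + 1\<close> vertices distinct; hence \<open>L \<union> C \<rightarrow> R\<close>. The other
  direction gives \<open>R \<union> C \<rightarrow> L\<close> with \<open>y \<in> L\<close> in the same way.\<close>

lemma dpath_crosses_into:
  assumes "dpath E p" "hd p \<notin> T" "last p \<in> T"
  obtains k where "Suc k < length p" "p ! k \<notin> T" "p ! Suc k \<in> T" "(p ! k, p ! Suc k) \<in> E"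
proof -
  have p: "p \<noteq> []" "\<forall>i. Suc i < length p \<longrightarrow> (p ! i, p ! Suc i) \<in> E"
    using assms(1) by (auto simp: dpath_def)
  define m where "m = (LEAST i. i < length p \<and> p ! i \<in> T)"
  have "length p - 1 < length p \<and> p ! (length p - 1) \<in> T"
    using p(1) assms(3) by (simp add: last_conv_nth)
  then have m: "m < length p" "p ! m \<in> T"
    unfolding m_def by (metis (mono_tags, lifting) LeastI)+
  have "m \<noteq> 0"
    using m(2) assms(2) p(1) by (metis hd_conv_nth)
  then obtain k where k: "m = Suc k" by (cases m) auto
  have "p ! k \<notin> T"
    using not_less_Least[of k "\<lambda>i. i < length p \<and> p ! i \<in> T"] m(1) k by (simp add: m_def)
  then show thesis
    using that m k p(2) by auto
qed

lemma Xy_path_exit_vertex: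
  assumes "Xy_path E X y p" "X \<inter> T = {}" "y \<in> T"
  obtains i where "i \<in> set p" "i \<notin> T" "\<exists>j\<in>T. (i, j) \<in> E"
proof -
  have "dpath E p" "hd p \<notin> T" "last p \<in> T"
    using assms by (auto simp: Xy_path_def)
  then obtain k where "Suc k < length p" "p ! k \<notin> T" "p ! Suc k \<in> T" "(p ! k, p ! Suc k) \<in> E"
    by (rule dpath_crosses_into)
  then show thesis
    using that[of "p ! k"] by auto
qed

lemma reduced_arrowD:
  assumes "reduced_arrow E f F X Y" "y \<in> Y"
  shows "\<exists>P. finite P \<and> f + 1 \<le> card P \<and>
           (\<forall>p\<in>P. Xy_path E X y p \<and> set p \<inter> F = {}) \<and>
           (\<forall>p\<in>P. \<forall>q\<in>P. p \<noteq> q \<longrightarrow> set p \<inter> set q = {y})"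
proof -
  have "Y \<noteq> {}" using assms(2) by blast
  then show ?thesis
    using assms unfolding reduced_arrow_def by simp
qed

lemma reach_arrow_from_reduced_arrow:
  assumes V: "finite V" "E \<subseteq> V \<times> V"
    and arrow: "reduced_arrow E f F X Y" and y: "y \<in> Y" "y \<in> T" and "X \<inter> T = {}"
  shows "reach_arrow E f (V - F - T) T"
proof -
  obtain P where P: "finite P" "f + 1 \<le> card P"
    "\<forall>p\<in>P. Xy_path E X y p \<and> set p \<inter> F = {}"
    "\<forall>p\<in>P. \<forall>q\<in>P. p \<noteq> q \<longrightarrow> set p \<inter> set q = {y}"
    using reduced_arrowD[OF arrow y(1)] by (elim exE conjE)
  have "\<forall>p\<in>P. \<exists>i. i \<in> set p \<and> i \<notin> T \<and> (\<exists>j\<in>T. (i, j) \<in> E)"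
  proof
    fix p assume "p \<in> P"
    then have "Xy_path E X y p" using P(3) by simp
    then obtain i where "i \<in> set p" "i \<notin> T" "\<exists>j\<in>T. (i, j) \<in> E"
      using \<open>X \<inter> T = {}\<close> y(2) by (rule Xy_path_exit_vertex)
    then show "\<exists>i. i \<in> set p \<and> i \<notin> T \<and> (\<exists>j\<in>T. (i, j) \<in> E)" by blast
  qed
  from bchoice[OF this] obtain g
    where g: "\<forall>p\<in>P. g p \<in> set p \<and> g p \<notin> T \<and> (\<exists>j\<in>T. (g p, j) \<in> E)"
    by blast
  let ?S = "{i \<in> V - F - T. \<exists>j\<in>T. (i, j) \<in> E}"
  have sub: "g ` P \<subseteq> ?S"
  proof
    fix x assume "x \<in> g ` P"
    then obtain p where p: "p \<in> P" "x = g p" by blast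
    then obtain j where "j \<in> T" "(g p, j) \<in> E" using g by blast
    then have "g p \<in> V" using V(2) by blast
    moreover have "g p \<notin> F" using g P(3) p(1) by blast
    ultimately show "x \<in> ?S" using g p \<open>j \<in> T\<close> \<open>(g p, j) \<in> E\<close> by blast
  qed
  have inj: "inj_on g P"
  proof (rule inj_onI, rule ccontr)
    fix p q assume pq: "p \<in> P" "q \<in> P" "g p = g q" "p \<noteq> q"
    then have "g p \<in> set p \<inter> set q" using g by (metis IntI)
    also have "set p \<inter> set q = {y}" using P(4) pq by blast
    finally have "g p \<in> T" using y(2) by simp
    then show False using g pq(1) by blast
  qed
  have "card P = card (g ` P)" using inj by (simp add: card_image)
  also have "\<dots> \<le> card ?S" using sub V(1) by (simp add: card_mono)
  finally have "card P \<le> card ?S" .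
  then show ?thesis
    using P(2) by (simp add: reach_arrow_def)
qed

theorem lemma7:
  fixes V :: "'a set" and E :: "('a \<times> 'a) set" and f :: nat
  assumes "simple_digraph V E"
    and "\<And>A B F. A \<union> B \<union> F = V \<Longrightarrow> A \<inter> B = {} \<Longrightarrow> A \<inter> F = {} \<Longrightarrow> B \<inter> F = {} \<Longrightarrow>
           A \<noteq> {} \<Longrightarrow> B \<noteq> {} \<Longrightarrow> card F \<le> f \<Longrightarrow>
           reduced_arrow E f F A B \<or> reduced_arrow E f F B A"
  shows "\<And>L C R F. L \<union> C \<union> R \<union> F = V \<Longrightarrow>
           L \<inter> C = {} \<Longrightarrow> L \<inter> R = {} \<Longrightarrow> L \<inter> F = {} \<Longrightarrow>
           C \<inter> R = {} \<Longrightarrow> C \<inter> F = {} \<Longrightarrow> R \<inter> F = {} \<Longrightarrow>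
           L \<noteq> {} \<Longrightarrow> R \<noteq> {} \<Longrightarrow> card F \<le> f \<Longrightarrow>
           reach_arrow E f (L \<union> C) R \<or> reach_arrow E f (R \<union> C) L"
proof -
  fix L C R F
  assume h: "L \<union> C \<union> R \<union> F = V" "L \<inter> C = {}" "L \<inter> R = {}" "L \<inter> F = {}"
    "C \<inter> R = {}" "C \<inter> F = {}" "R \<inter> F = {}" "L \<noteq> {}" "R \<noteq> {}" "card F \<le> f"
  have V: "finite V" "E \<subseteq> V \<times> V"
    using assms(1) by (auto simp: simple_digraph_def)
  obtain l r where "l \<in> L" "r \<in> R"
    using h by blast
  have "reduced_arrow E f F L (C \<union> R) \<or> reduced_arrow E f F (C \<union> R) L"
    by (rule assms(2)) (use h in blast)+
  then show "reach_arrow E f (L \<union> C) R \<or> reach_arrow E f (R \<union> C) L"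
  proof
    assume "reduced_arrow E f F L (C \<union> R)"
    from reach_arrow_from_reduced_arrow[OF V this, of r R] \<open>r \<in> R\<close> h
    have "reach_arrow E f (V - F - R) R" by blast
    moreover have "V - F - R = L \<union> C" using h by blast
    ultimately show ?thesis by simp
  next
    assume "reduced_arrow E f F (C \<union> R) L"
    from reach_arrow_from_reduced_arrow[OF V this, of l L] \<open>l \<in> L\<close> h
    have "reach_arrow E f (V - F - L) L" by blast
    moreover have "V - F - L = R \<union> C" using h by blast
    ultimately show ?thesis by simp
  qed
qed

end
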